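(* Let $G$ be a graph. Then $\chi_{alg}(G)=1$ if and only if $G$ is the empty graph (has no edges). Hence $\chi_{alg}(G)=1\iff\chi(G)=1$.
   Context: Graphs are finite, loopless, with symmetric edge sets; $K_c$ is the complete graph on $c$ vertices; $\chi(G)$ is the usual chromatic number. For $|I|=n$, $|O|=m$ ($O=\{0,\dots,m-1\}$), $\mathbb F(n,m)$ is the free product of $n$ copies of the cyclic group of order $m$ with generators $u_v$, $\mathbb C[\mathbb F(n,m)]$ its group $*$-algebra, $\omega=e^{2\pi i/m}$, $e_{v,a}=\frac1m\sum_{k=0}^{m-1}(\omega^{-a}u_v)^k$. For graphs $G,H$, the graph homomorphism game has $I=V(G)$, $O=V(H)$, $\lambda(v,w,a,b)=0$ iff ($v=w$, $a\ne b$) or ($(v,w)\in E(G)$, $(a,b)\notin E(H)$); $\mathcal I(G,H)$ is the two-sided $*$-ideal generated by $\{e_{v,a}e_{w,b}:\lambda(v,w,a,b)=0\}$, $\mathcal A(G,H)$ the quotient, and $\chi_{alg}(G)=\min\{c:\mathcal A(G,K_c)\ne0\}$. *)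

theory Defs
  imports Complex_Main
begin

definition graph :: "'v set \<Rightarrow> ('v \<times> 'v) set \<Rightarrow> bool" where
  "graph V E \<longleftrightarrow> finite V \<and> E \<subseteq> V \<times> V \<and> sym E \<and> (\<forall>v. (v, v) \<notin> E)"

definition Kc_edges :: "nat \<Rightarrow> (nat \<times> nat) set" where
  "Kc_edges c = {(a, b). a < c \<and> b < c \<and> a \<noteq> b}"

definition chromatic_number :: "'v set \<Rightarrow> ('v \<times> 'v) set \<Rightarrow> nat" where
  "chromatic_number V E = (LEAST c. \<exists>f. (\<forall>v\<in>V. f v < c) \<and> (\<forall>(v, w)\<in>E. f v \<noteq> f w))"

section \<open>The free product F(V,m) of copies of Z/m, as reduced words\<close>

text \<open>A letter (v,k) stands for u_v^k. Reduced words: 1 <= k < m, v in V,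
  adjacent letters with distinct generators.\<close>
fun reduced_word :: "nat \<Rightarrow> 'v set \<Rightarrow> ('v \<times> nat) list \<Rightarrow> bool" where
  "reduced_word m V [] = True"
| "reduced_word m V [(v, k)] = (v \<in> V \<and> 0 < k \<and> k < m)"
| "reduced_word m V ((v, k) # (u, j) # w) =
     (v \<in> V \<and> 0 < k \<and> k < m \<and> v \<noteq> u \<and> reduced_word m V ((u, j) # w))"

fun red_cons :: "nat \<Rightarrow> 'v \<times> nat \<Rightarrow> ('v \<times> nat) list \<Rightarrow> ('v \<times> nat) list" where
  "red_cons m (v, k) w =
     (if k mod m = 0 then w else
      (case w of
         [] \<Rightarrow> [(v, k mod m)]
       | (u, j) # w' \<Rightarrow>
           (if u = v then (if (k + j) mod m = 0 then w' else (v, (k + j) mod m) # w')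
            else (v, k mod m) # w)))"

definition grp_mult :: "nat \<Rightarrow> ('v \<times> nat) list \<Rightarrow> ('v \<times> nat) list \<Rightarrow> ('v \<times> nat) list" where
  "grp_mult m x y = foldr (red_cons m) x y"

definition grp_inv :: "nat \<Rightarrow> ('v \<times> nat) list \<Rightarrow> ('v \<times> nat) list" where
  "grp_inv m x = rev (map (\<lambda>(v, k). (v, m - k)) x)"

definition GA :: "nat \<Rightarrow> 'v set \<Rightarrow> (('v \<times> nat) list \<Rightarrow> complex) set" where
  "GA m V = {f. finite {w. f w \<noteq> 0} \<and> (\<forall>w. f w \<noteq> 0 \<longrightarrow> reduced_word m V w)}"

definition ga_one :: "('v \<times> nat) list \<Rightarrow> complex" where
  "ga_one = (\<lambda>w. if w = [] then 1 else 0)"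

definition ga_add :: "(('v \<times> nat) list \<Rightarrow> complex) \<Rightarrow> (('v \<times> nat) list \<Rightarrow> complex) \<Rightarrow> ('v \<times> nat) list \<Rightarrow> complex" where
  "ga_add f g = (\<lambda>w. f w + g w)"

definition ga_smult :: "complex \<Rightarrow> (('v \<times> nat) list \<Rightarrow> complex) \<Rightarrow> ('v \<times> nat) list \<Rightarrow> complex" where
  "ga_smult c f = (\<lambda>w. c * f w)"

definition ga_mult :: "nat \<Rightarrow> (('v \<times> nat) list \<Rightarrow> complex) \<Rightarrow> (('v \<times> nat) list \<Rightarrow> complex) \<Rightarrow> ('v \<times> nat) list \<Rightarrow> complex" where
  "ga_mult m f g = (\<lambda>w. \<Sum>(x, y) \<in> {(x, y). f x \<noteq> 0 \<and> g y \<noteq> 0 \<and> grp_mult m x y = w}. f x * g y)"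

definition ga_star :: "nat \<Rightarrow> (('v \<times> nat) list \<Rightarrow> complex) \<Rightarrow> ('v \<times> nat) list \<Rightarrow> complex" where
  "ga_star m f = (\<lambda>w. cnj (f (grp_inv m w)))"

fun ga_pow :: "nat \<Rightarrow> (('v \<times> nat) list \<Rightarrow> complex) \<Rightarrow> nat \<Rightarrow> ('v \<times> nat) list \<Rightarrow> complex" where
  "ga_pow m f 0 = ga_one"
| "ga_pow m f (Suc k) = ga_mult m f (ga_pow m f k)"

text \<open>The generator u_v (the group element u_v, which is trivial when m = 1).\<close>
definition ga_gen :: "nat \<Rightarrow> 'v \<Rightarrow> ('v \<times> nat) list \<Rightarrow> complex" where
  "ga_gen m v = (\<lambda>w. if w = red_cons m (v, 1) [] then 1 else 0)"

definition omega :: "nat \<Rightarrow> complex" where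
  "omega m = cis (2 * pi / real m)"

definition proj_e :: "nat \<Rightarrow> 'v \<Rightarrow> nat \<Rightarrow> ('v \<times> nat) list \<Rightarrow> complex" where
  "proj_e m v a = (\<lambda>w. (1 / of_nat m) *
      (\<Sum>k<m. ga_pow m (ga_smult (inverse (omega m) ^ a) (ga_gen m v)) k w))"

inductive_set star_ideal ::
  "nat \<Rightarrow> 'v set \<Rightarrow> (('v \<times> nat) list \<Rightarrow> complex) set \<Rightarrow> (('v \<times> nat) list \<Rightarrow> complex) set"
  for m :: nat and V :: "'v set" and S :: "(('v \<times> nat) list \<Rightarrow> complex) set" where
  gen: "s \<in> S \<Longrightarrow> s \<in> star_ideal m V S"
| zero: "(\<lambda>w. 0) \<in> star_ideal m V S"
| add: "x \<in> star_ideal m V S \<Longrightarrow> y \<in> star_ideal m V S \<Longrightarrow> ga_add x y \<in> star_ideal m V S"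
| lmult: "a \<in> GA m V \<Longrightarrow> x \<in> star_ideal m V S \<Longrightarrow> ga_mult m a x \<in> star_ideal m V S"
| rmult: "a \<in> GA m V \<Longrightarrow> x \<in> star_ideal m V S \<Longrightarrow> ga_mult m x a \<in> star_ideal m V S"
| star: "x \<in> star_ideal m V S \<Longrightarrow> ga_star m x \<in> star_ideal m V S"

text \<open>Generators of I(G,H) for the graph homomorphism game with G = (V,E),
  H with vertex set {0,...,m-1} and edge set EH.\<close>
definition hom_ideal_gens ::
  "'v set \<Rightarrow> ('v \<times> 'v) set \<Rightarrow> (nat \<times> nat) set \<Rightarrow> nat \<Rightarrow> (('v \<times> nat) list \<Rightarrow> complex) set" where
  "hom_ideal_gens V E EH m =
     {ga_mult m (proj_e m v a) (proj_e m w b) | v w a b.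
        v \<in> V \<and> w \<in> V \<and> a < m \<and> b < m \<and>
        ((v = w \<and> a \<noteq> b) \<or> ((v, w) \<in> E \<and> (a, b) \<notin> EH))}"

definition hom_ideal :: "'v set \<Rightarrow> ('v \<times> 'v) set \<Rightarrow> (nat \<times> nat) set \<Rightarrow> nat \<Rightarrow> (('v \<times> nat) list \<Rightarrow> complex) set" where
  "hom_ideal V E EH m = star_ideal m V (hom_ideal_gens V E EH m)"

text \<open>A(G,H) = C[F]/I(G,H) is nonzero iff 1 is not in I(G,H).\<close>
definition hom_algebra_nonzero :: "'v set \<Rightarrow> ('v \<times> 'v) set \<Rightarrow> (nat \<times> nat) set \<Rightarrow> nat \<Rightarrow> bool" where
  "hom_algebra_nonzero V E EH m \<longleftrightarrow> ga_one \<notin> hom_ideal V E EH m"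

definition chi_alg :: "'v set \<Rightarrow> ('v \<times> 'v) set \<Rightarrow> nat" where
  "chi_alg V E = (LEAST c. 1 \<le> c \<and> hom_algebra_nonzero V E (Kc_edges c) c)"

end

theory Submission
  imports Defs
begin

(* A proper colouring col of G with c colours yields the character u_v \<mapsto> \<omega>^(col v) of
   \<complex>[F(n, c)]; it sends e_{v,a} to 1 if a = col v and to 0 otherwise, hence kills every
   generator of \<I>(G, K_c) but not 1, so \<A>(G, K_c) \<noteq> 0.  This shows that the least element
   defining \<chi>_alg(G) exists and, with c = 1, that \<A>(G, K_1) \<noteq> 0 when G has no edges.
   Conversely, over K_1 every e_{v,0} equals 1, so an edge (v, w) puts 1 = e_{v,0} e_{w,0} into
   \<I>(G, K_1). *)

definition bounded_exponents :: "nat \<Rightarrow> ('v \<times> nat) list \<Rightarrow> bool" where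
  "bounded_exponents m w \<longleftrightarrow> (\<forall>(v, k)\<in>set w. 0 < k \<and> k < m)"

definition word_eval :: "('v \<Rightarrow> complex) \<Rightarrow> ('v \<times> nat) list \<Rightarrow> complex" where
  "word_eval z w = prod_list (map (\<lambda>(v, k). z v ^ k) w)"

lemma word_eval_Nil [simp]: "word_eval z [] = 1"
  and word_eval_Cons [simp]: "word_eval z ((v, k) # w) = z v ^ k * word_eval z w"
  and word_eval_append [simp]: "word_eval z (x @ y) = word_eval z x * word_eval z y"
  by (simp_all add: word_eval_def)

lemma power_mod_root_unity:
  fixes x :: "'a :: monoid_mult"
  assumes "x ^ m = 1"
  shows "x ^ k = x ^ (k mod m)"
proof -
  have "x ^ k = (x ^ m) ^ (k div m) * x ^ (k mod m)"
    by (metis div_mult_mod_eq mult.commute power_add power_mult)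
  then show ?thesis using assms by simp
qed

lemma word_eval_red_cons:
  assumes "\<forall>v. z v ^ m = 1"
  shows "word_eval z (red_cons m (v, k) w) = z v ^ k * word_eval z w"
proof -
  have mod: "z v ^ i = z v ^ (i mod m)" for i
    using power_mod_root_unity assms by blast
  show ?thesis
  proof (cases "k mod m = 0 \<or> w = []")
    case True
    then show ?thesis using mod[of k] by auto
  next
    case False
    then obtain u j w' where w: "w = (u, j) # w'" and k: "k mod m \<noteq> 0"
      by (metis list.exhaust prod.exhaust)
    have "z v ^ (k + j) = z v ^ k * z v ^ j" by (rule power_add)
    then show ?thesis using w k mod[of k] mod[of "k + j"] by auto
  qed
qed

lemma word_eval_grp_mult:
  assumes "\<forall>v. z v ^ m = 1"
  shows "word_eval z (grp_mult m x y) = word_eval z x * word_eval z y"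
  unfolding grp_mult_def
  by (induction x) (auto simp del: red_cons.simps simp: word_eval_red_cons[OF assms])

lemma bounded_exponents_red_cons:
  "0 < m \<Longrightarrow> bounded_exponents m w \<Longrightarrow> bounded_exponents m (red_cons m (v, k) w)"
  by (auto simp: bounded_exponents_def split: list.splits)

lemma bounded_exponents_grp_mult:
  "0 < m \<Longrightarrow> bounded_exponents m y \<Longrightarrow> bounded_exponents m (grp_mult m x y)"
  unfolding grp_mult_def
  by (induction x) (auto simp del: red_cons.simps intro: bounded_exponents_red_cons)

lemma grp_inv_grp_inv: "bounded_exponents m w \<Longrightarrow> grp_inv m (grp_inv m w) = w"
  by (induction w) (auto simp: grp_inv_def bounded_exponents_def)

lemma bounded_exponents_grp_inv [simp]:
  "bounded_exponents m (grp_inv m w) \<longleftrightarrow> bounded_exponents m w"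
  by (auto simp: grp_inv_def bounded_exponents_def)

lemma root_unity_power_diff:
  fixes x :: complex
  assumes "x ^ m = 1" "k \<le> m"
  shows "x ^ (m - k) = cnj (x ^ k)"
proof (cases "m = 0")
  case False
  then have "norm (x ^ k) = 1"
    using assms(1) power_eq_1_iff by (metis norm_power power_one)
  then have unit: "x ^ k * cnj (x ^ k) = 1"
    using complex_norm_square[of "x ^ k"] by simp
  have "x ^ (m - k) = x ^ (m - k) * (x ^ k * cnj (x ^ k))" by (simp only: unit mult_1_right)
  also have "\<dots> = x ^ m * cnj (x ^ k)"
    using assms(2) by (simp add: mult.assoc flip: power_add)
  finally show ?thesis using assms(1) by simp
qed (use assms in simp)

lemma word_eval_grp_inv:
  assumes "\<forall>v. z v ^ m = 1" "bounded_exponents m w"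
  shows "word_eval z (grp_inv m w) = cnj (word_eval z w)"
  using assms(2)
proof (induction w)
  case (Cons p w)
  obtain v k where p: "p = (v, k)" by (cases p)
  have "bounded_exponents m w" "k \<le> m" using Cons.prems p by (auto simp: bounded_exponents_def)
  then show ?case
    using Cons.IH root_unity_power_diff[of "z v" m k] assms(1) p
    by (simp add: grp_inv_def case_prod_beta mult.commute)
qed (simp add: grp_inv_def)

subsection \<open>A one-dimensional representation of the group algebra\<close>

definition supp :: "(('v \<times> nat) list \<Rightarrow> complex) \<Rightarrow> ('v \<times> nat) list set" where
  "supp f = {w. f w \<noteq> 0}"

text \<open>Weaker than membership in \<open>GA\<close> (words need not be reduced), so that closure under
  products and the involution is immediate.\<close>
definition admissible :: "nat \<Rightarrow> (('v \<times> nat) list \<Rightarrow> complex) \<Rightarrow> bool" where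
  "admissible m f \<longleftrightarrow> finite (supp f) \<and> (\<forall>w\<in>supp f. bounded_exponents m w)"

text \<open>Induced by \<open>u\<^sub>v \<mapsto> z v\<close>; multiplicative only when all \<open>z v\<close> are \<open>m\<close>-th roots of unity.\<close>
definition ga_eval :: "('v \<Rightarrow> complex) \<Rightarrow> (('v \<times> nat) list \<Rightarrow> complex) \<Rightarrow> complex" where
  "ga_eval z f = (\<Sum>w\<in>supp f. f w * word_eval z w)"

lemma ga_eval_eq_sum_superset:
  assumes "finite S" "supp f \<subseteq> S"
  shows "ga_eval z f = (\<Sum>w\<in>S. f w * word_eval z w)"
  unfolding ga_eval_def
  by (rule sum.mono_neutral_left) (use assms in \<open>auto simp: supp_def\<close>)

lemma supp_ga_mult: "supp (ga_mult m f g) \<subseteq> (\<lambda>(x, y). grp_mult m x y) ` (supp f \<times> supp g)"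
proof
  fix w assume w: "w \<in> supp (ga_mult m f g)"
  have "{(x, y). f x \<noteq> 0 \<and> g y \<noteq> 0 \<and> grp_mult m x y = w} \<noteq> {}"
  proof
    assume "{(x, y). f x \<noteq> 0 \<and> g y \<noteq> 0 \<and> grp_mult m x y = w} = {}"
    then have "ga_mult m f g w = 0" unfolding ga_mult_def by (simp only: sum.empty)
    then show False using w by (simp add: supp_def)
  qed
  then show "w \<in> (\<lambda>(x, y). grp_mult m x y) ` (supp f \<times> supp g)" by (force simp: supp_def)
qed

lemma admissible_ga_mult:
  assumes "0 < m" "admissible m f" "admissible m g"
  shows "admissible m (ga_mult m f g)"
  unfolding admissible_def
proof (intro conjI ballI)
  show "finite (supp (ga_mult m f g))"
    using assms supp_ga_mult[of m f g]
    by (meson admissible_def finite_SigmaI finite_imageI finite_subset)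
  fix w assume "w \<in> supp (ga_mult m f g)"
  then obtain x y where "y \<in> supp g" "w = grp_mult m x y" using supp_ga_mult[of m f g] by force
  then show "bounded_exponents m w"
    using assms by (auto simp: admissible_def intro: bounded_exponents_grp_mult)
qed

lemma ga_eval_mult:
  assumes z: "\<forall>v. z v ^ m = 1" and f: "finite (supp f)" and g: "finite (supp g)"
  shows "ga_eval z (ga_mult m f g) = ga_eval z f * ga_eval z g"
proof -
  let ?A = "supp f \<times> supp g"
  let ?mult = "\<lambda>(x, y). grp_mult m x y"
  let ?fiber = "\<lambda>w. {p \<in> ?A. ?mult p = w}"
  have A: "finite ?A" using f g by simp
  have "ga_eval z (ga_mult m f g) = (\<Sum>w\<in>?mult ` ?A. ga_mult m f g w * word_eval z w)"
    by (rule ga_eval_eq_sum_superset) (use A supp_ga_mult[of m f g] in auto)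
  also have "\<dots> = (\<Sum>w\<in>?mult ` ?A. \<Sum>p\<in>?fiber w. f (fst p) * g (snd p) * word_eval z (?mult p))"
  proof (rule sum.cong[OF refl])
    fix w
    have "{(x, y). f x \<noteq> 0 \<and> g y \<noteq> 0 \<and> grp_mult m x y = w} = ?fiber w"
      by (auto simp: supp_def)
    then show "ga_mult m f g w * word_eval z w =
        (\<Sum>p\<in>?fiber w. f (fst p) * g (snd p) * word_eval z (?mult p))"
      by (simp add: ga_mult_def sum_distrib_right case_prod_beta)
  qed
  also have "\<dots> = (\<Sum>p\<in>?A. f (fst p) * g (snd p) * word_eval z (?mult p))"
    by (rule sum.group) (use A in auto)
  also have "\<dots> = (\<Sum>(x, y)\<in>?A. (f x * word_eval z x) * (g y * word_eval z y))"
    by (intro sum.cong refl) (auto simp: word_eval_grp_mult[OF z] mult_ac)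
  also have "\<dots> = (\<Sum>x\<in>supp f. \<Sum>y\<in>supp g. (f x * word_eval z x) * (g y * word_eval z y))"
    by (simp add: sum.cartesian_product)
  also have "\<dots> = ga_eval z f * ga_eval z g"
    by (simp add: ga_eval_def sum_product)
  finally show ?thesis .
qed

lemma supp_ga_star:
  assumes "admissible m f"
  shows "supp (ga_star m f) = grp_inv m ` supp f"
proof
  show "supp (ga_star m f) \<subseteq> grp_inv m ` supp f"
  proof
    fix w assume "w \<in> supp (ga_star m f)"
    then have w: "grp_inv m w \<in> supp f" by (simp add: supp_def ga_star_def)
    then have "bounded_exponents m w" using assms by (auto simp: admissible_def)
    then have "w = grp_inv m (grp_inv m w)" by (simp add: grp_inv_grp_inv)
    then show "w \<in> grp_inv m ` supp f" using w by blast
  qed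
  show "grp_inv m ` supp f \<subseteq> supp (ga_star m f)"
    using assms by (auto simp: admissible_def supp_def ga_star_def grp_inv_grp_inv)
qed

lemma admissible_ga_star: "admissible m f \<Longrightarrow> admissible m (ga_star m f)"
  using supp_ga_star[of m f] by (auto simp: admissible_def)

lemma ga_eval_star:
  assumes f: "admissible m f" and z: "\<forall>v. z v ^ m = 1"
  shows "ga_eval z (ga_star m f) = cnj (ga_eval z f)"
proof -
  have bounded: "bounded_exponents m u" if "u \<in> supp f" for u
    using f that by (simp add: admissible_def)
  have inj: "inj_on (grp_inv m) (supp f)"
    by (rule inj_on_inverseI[where g = "grp_inv m"]) (simp add: bounded grp_inv_grp_inv)
  have "ga_eval z (ga_star m f) = (\<Sum>w\<in>grp_inv m ` supp f. ga_star m f w * word_eval z w)"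
    unfolding ga_eval_def supp_ga_star[OF f] ..
  also have "\<dots> = (\<Sum>u\<in>supp f. ga_star m f (grp_inv m u) * word_eval z (grp_inv m u))"
    by (simp add: sum.reindex[OF inj])
  also have "\<dots> = (\<Sum>u\<in>supp f. cnj (f u * word_eval z u))"
    by (rule sum.cong) (simp_all add: bounded ga_star_def grp_inv_grp_inv word_eval_grp_inv[OF z])
  also have "\<dots> = cnj (ga_eval z f)"
    by (simp add: ga_eval_def cnj_sum)
  finally show ?thesis .
qed

lemma supp_ga_add: "supp (ga_add x y) \<subseteq> supp x \<union> supp y"
  by (auto simp: supp_def ga_add_def)

lemma admissible_ga_add: "admissible m x \<Longrightarrow> admissible m y \<Longrightarrow> admissible m (ga_add x y)"
  using supp_ga_add[of x y] by (auto simp: admissible_def intro: finite_subset)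

lemma ga_eval_add:
  assumes "admissible m x" "admissible m y"
  shows "ga_eval z (ga_add x y) = ga_eval z x + ga_eval z y"
proof -
  let ?S = "supp x \<union> supp y"
  have S: "finite ?S" using assms by (simp add: admissible_def)
  have "ga_eval z (ga_add x y) = (\<Sum>w\<in>?S. ga_add x y w * word_eval z w)"
    using S supp_ga_add by (rule ga_eval_eq_sum_superset)
  also have "\<dots> = (\<Sum>w\<in>?S. x w * word_eval z w) + (\<Sum>w\<in>?S. y w * word_eval z w)"
    by (simp add: ga_add_def distrib_right sum.distrib)
  also have "\<dots> = ga_eval z x + ga_eval z y"
    using S by (simp add: ga_eval_eq_sum_superset[symmetric])
  finally show ?thesis .
qed

lemma supp_ga_smult: "supp (ga_smult c f) \<subseteq> supp f"
  by (auto simp: supp_def ga_smult_def)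

lemma admissible_ga_smult: "admissible m f \<Longrightarrow> admissible m (ga_smult c f)"
  using supp_ga_smult[of c f] by (auto simp: admissible_def intro: finite_subset)

lemma ga_eval_smult:
  assumes "admissible m f"
  shows "ga_eval z (ga_smult c f) = c * ga_eval z f"
proof -
  have "ga_eval z (ga_smult c f) = (\<Sum>w\<in>supp f. ga_smult c f w * word_eval z w)"
    using assms supp_ga_smult by (intro ga_eval_eq_sum_superset) (auto simp: admissible_def)
  then show ?thesis by (simp add: ga_eval_def ga_smult_def sum_distrib_left mult.assoc)
qed

lemma supp_ga_one: "supp ga_one = {[]}"
  by (auto simp: supp_def ga_one_def)

lemma admissible_ga_one: "admissible m ga_one"
  by (simp add: admissible_def supp_ga_one bounded_exponents_def)

lemma ga_eval_one: "ga_eval z ga_one = 1"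
  unfolding ga_eval_def supp_ga_one by (simp add: ga_one_def)

lemma admissible_zero: "admissible m (\<lambda>w. 0)"
  by (simp add: admissible_def supp_def)

lemma ga_eval_zero: "ga_eval z (\<lambda>w. 0) = 0"
  by (simp add: ga_eval_def supp_def)

lemma supp_ga_gen: "supp (ga_gen m v) = {red_cons m (v, 1) []}"
  by (simp add: supp_def ga_gen_def)

lemma admissible_ga_gen: "0 < m \<Longrightarrow> admissible m (ga_gen m v)"
  by (simp add: admissible_def supp_ga_gen bounded_exponents_red_cons bounded_exponents_def)

lemma ga_eval_gen: "\<forall>v. z v ^ m = 1 \<Longrightarrow> ga_eval z (ga_gen m v) = z v"
  unfolding ga_eval_def supp_ga_gen by (simp add: ga_gen_def word_eval_red_cons del: red_cons.simps)

lemma ga_eval_pow: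
  assumes "0 < m" "admissible m f" "\<forall>v. z v ^ m = 1"
  shows "admissible m (ga_pow m f k) \<and> ga_eval z (ga_pow m f k) = ga_eval z f ^ k"
proof (induction k)
  case (Suc k)
  then show ?case
    using assms admissible_ga_mult[of m f "ga_pow m f k"] ga_eval_mult[of z m f "ga_pow m f k"]
    by (simp add: admissible_def)
qed (simp add: admissible_ga_one ga_eval_one)

lemma admissible_of_GA: "a \<in> GA m V \<Longrightarrow> admissible m a"
proof -
  have "reduced_word m V w \<Longrightarrow> bounded_exponents m w" for w
    by (induction m V w rule: reduced_word.induct) (auto simp: bounded_exponents_def)
  then show "a \<in> GA m V \<Longrightarrow> admissible m a"
    by (auto simp: GA_def admissible_def supp_def)
qed

lemma ga_eval_star_ideal:
  assumes m: "0 < m" and z: "\<forall>v. z v ^ m = 1"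
    and S: "\<And>s. s \<in> S \<Longrightarrow> admissible m s \<and> ga_eval z s = 0"
    and x: "x \<in> star_ideal m V S"
  shows "admissible m x \<and> ga_eval z x = 0"
  using x
proof (induction rule: star_ideal.induct)
  case (add x y)
  then show ?case by (simp add: admissible_ga_add ga_eval_add[of m])
next
  case (lmult a x)
  then show ?case
    using admissible_of_GA[of a] admissible_ga_mult[OF m, of a x] ga_eval_mult[OF z, of a x]
    by (simp add: admissible_def)
next
  case (rmult a x)
  then show ?case
    using admissible_of_GA[of a] admissible_ga_mult[OF m, of x a] ga_eval_mult[OF z, of x a]
    by (simp add: admissible_def)
next
  case (star x)
  then show ?case by (simp add: admissible_ga_star ga_eval_star[OF _ z])
qed (use S in \<open>auto simp: admissible_zero ga_eval_zero\<close>)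

lemma ga_eval_sum:
  assumes "finite K" "\<And>k. k \<in> K \<Longrightarrow> admissible m (P k)"
  shows "admissible m (\<lambda>w. \<Sum>k\<in>K. P k w) \<and>
    ga_eval z (\<lambda>w. \<Sum>k\<in>K. P k w) = (\<Sum>k\<in>K. ga_eval z (P k))"
  using assms
proof (induction K rule: finite_induct)
  case empty
  then show ?case by (simp add: admissible_zero ga_eval_zero)
next
  case (insert i K)
  have "(\<lambda>w. \<Sum>k\<in>insert i K. P k w) = ga_add (P i) (\<lambda>w. \<Sum>k\<in>K. P k w)"
    using insert.hyps by (simp add: ga_add_def)
  then show ?case
    using insert by (simp add: admissible_ga_add ga_eval_add[of m])
qed

lemma ga_eval_proj_e:
  assumes m: "0 < m" and z: "\<forall>v. z v ^ m = 1"
  shows "admissible m (proj_e m v a) \<and>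
    ga_eval z (proj_e m v a) = (1 / of_nat m) * (\<Sum>k<m. (inverse (omega m) ^ a * z v) ^ k)"
proof -
  define s where "s = ga_smult (inverse (omega m) ^ a) (ga_gen m v)"
  have s: "admissible m s" "ga_eval z s = inverse (omega m) ^ a * z v"
    unfolding s_def
    by (simp_all add: admissible_ga_smult admissible_ga_gen[OF m]
        ga_eval_smult[OF admissible_ga_gen[OF m]] ga_eval_gen[OF z])
  have powers: "admissible m (ga_pow m s k)" "ga_eval z (ga_pow m s k) = ga_eval z s ^ k" for k
    using ga_eval_pow[OF m s(1) z] by simp_all
  have sum: "admissible m (\<lambda>w. \<Sum>k<m. ga_pow m s k w)"
    "ga_eval z (\<lambda>w. \<Sum>k<m. ga_pow m s k w) = (\<Sum>k<m. ga_eval z s ^ k)"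
    using ga_eval_sum[of "{..<m}" m "ga_pow m s"] powers by simp_all
  have "proj_e m v a = ga_smult (1 / of_nat m) (\<lambda>w. \<Sum>k<m. ga_pow m s k w)"
    by (simp add: proj_e_def ga_smult_def s_def)
  then show ?thesis
    using sum s(2) by (simp add: admissible_ga_smult ga_eval_smult)
qed

lemma omega_power: "omega m ^ k = cis (2 * pi * real k / real m)"
  by (simp add: omega_def DeMoivre mult_ac)

lemma omega_power_eq_1: "0 < m \<Longrightarrow> omega m ^ m = 1"
  by (simp add: omega_power)

lemma omega_power_inj: "0 < m \<Longrightarrow> i < m \<Longrightarrow> j < m \<Longrightarrow> omega m ^ i = omega m ^ j \<Longrightarrow> i = j"
  using bij_betw_roots_unity[of m] by (auto simp: omega_power bij_betw_def inj_on_def)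

lemma ga_eval_proj_e_omega:
  assumes m: "0 < m" and z: "\<forall>v. z v ^ m = 1" and zv: "z v = omega m ^ c"
    and c: "c < m" and a: "a < m"
  shows "ga_eval z (proj_e m v a) = (if a = c then 1 else 0)"
proof -
  define q where "q = inverse (omega m) ^ a * omega m ^ c"
  have nz: "omega m \<noteq> 0" by (simp add: omega_def)
  have "q ^ m = inverse ((omega m ^ m) ^ a) * (omega m ^ m) ^ c"
    by (simp add: q_def power_mult_distrib power_inverse flip: power_mult mult.commute)
  then have qm: "q ^ m = 1" using omega_power_eq_1[OF m] by simp
  have "q = 1 \<longleftrightarrow> omega m ^ c = omega m ^ a"
    using nz by (auto simp: q_def power_inverse field_simps)
  then have q1: "q = 1 \<longleftrightarrow> a = c" using omega_power_inj[OF m c a] by auto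
  have "ga_eval z (proj_e m v a) = (1 / of_nat m) * (\<Sum>k<m. q ^ k)"
    using ga_eval_proj_e[OF m z, of v a] zv by (simp add: q_def)
  also have "\<dots> = (if a = c then 1 else 0)"
  proof (cases "a = c")
    case True
    then have "q = 1" using q1 by simp
    then show ?thesis using True m by simp
  next
    case False
    then have "q \<noteq> 1" using q1 by simp
    then show ?thesis using False qm by (simp add: geometric_sum)
  qed
  finally show ?thesis .
qed

definition proper_colouring :: "'v set \<Rightarrow> ('v \<times> 'v) set \<Rightarrow> nat \<Rightarrow> ('v \<Rightarrow> nat) \<Rightarrow> bool" where
  "proper_colouring V E c f \<longleftrightarrow> (\<forall>v\<in>V. f v < c) \<and> (\<forall>(v, w)\<in>E. f v \<noteq> f w)"

lemma chromatic_number_altdef: "chromatic_number V E = (LEAST c. \<exists>f. proper_colouring V E c f)"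
  by (simp add: chromatic_number_def proper_colouring_def)

lemma graph_proper_colouring_exists:
  assumes "graph V E"
  shows "\<exists>c f. 0 < c \<and> proper_colouring V E c f"
proof -
  obtain f :: "'a \<Rightarrow> nat" and n where f: "f ` V = {i. i < n}" "inj_on f V"
    using assms finite_imp_inj_to_nat_seg by (metis graph_def)
  have "proper_colouring V E (Suc n) f"
    using assms f by (fastforce simp: proper_colouring_def graph_def inj_on_def)
  then show ?thesis by blast
qed

lemma proper_colouring_1_iff:
  assumes "E \<subseteq> V \<times> V"
  shows "(\<exists>f. proper_colouring V E 1 f) \<longleftrightarrow> E = {}"
  using assms by (fastforce simp: proper_colouring_def)

lemma hom_algebra_nonzero_of_colouring:
  fixes V :: "'v set" and E :: "('v \<times> 'v) set"
  assumes m: "0 < m" and col: "proper_colouring V E m col"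
  shows "hom_algebra_nonzero V E (Kc_edges m) m"
proof -
  define z where "z v = omega m ^ col v" for v
  have z: "\<forall>v. z v ^ m = 1"
    using omega_power_eq_1[OF m] by (metis z_def power_mult mult.commute power_one)
  have proj: "ga_eval z (proj_e m v a) = (if a = col v then 1 else 0)" if "v \<in> V" "a < m" for v a
    using ga_eval_proj_e_omega[OF m z z_def[of v]] col that by (simp add: proper_colouring_def)
  have adm: "admissible m (proj_e m v a)" for v :: 'v and a
    using ga_eval_proj_e[OF m z] by blast
  have gens: "admissible m s \<and> ga_eval z s = 0"
    if gen: "s \<in> hom_ideal_gens V E (Kc_edges m) m" for s
  proof -
    obtain v w a b where s: "s = ga_mult m (proj_e m v a) (proj_e m w b)"
      and vw: "v \<in> V" "w \<in> V" "a < m" "b < m"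
      and forbidden: "(v = w \<and> a \<noteq> b) \<or> ((v, w) \<in> E \<and> (a, b) \<notin> Kc_edges m)"
      using gen unfolding hom_ideal_gens_def by blast
    have "\<not> (a = col v \<and> b = col w)"
      using forbidden col vw by (auto simp: Kc_edges_def proper_colouring_def)
    then have "ga_eval z (proj_e m v a) * ga_eval z (proj_e m w b) = 0"
      using proj vw by auto
    moreover have "ga_eval z s = ga_eval z (proj_e m v a) * ga_eval z (proj_e m w b)"
      unfolding s using adm by (intro ga_eval_mult[OF z]) (simp_all add: admissible_def)
    ultimately show ?thesis
      using s admissible_ga_mult[OF m adm adm] by simp
  qed
  have "ga_one \<notin> star_ideal m V (hom_ideal_gens V E (Kc_edges m) m)"
  proof
    assume "ga_one \<in> star_ideal m V (hom_ideal_gens V E (Kc_edges m) m)"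
    then have "ga_eval z ga_one = 0" using ga_eval_star_ideal[OF m z] gens by blast
    then show False by (simp add: ga_eval_one)
  qed
  then show ?thesis by (simp add: hom_algebra_nonzero_def hom_ideal_def)
qed

lemma proj_e_1: "proj_e 1 v a = ga_one"
  by (simp add: proj_e_def fun_eq_iff)

lemma ga_mult_1_one_one: "ga_mult 1 ga_one ga_one = ga_one"
proof
  fix w :: "('v \<times> nat) list"
  have "{(x, y). ga_one x \<noteq> (0::complex) \<and> ga_one y \<noteq> (0::complex) \<and> grp_mult 1 x y = w} =
        (if w = [] then {([], [])} else {})"
    by (auto simp: ga_one_def grp_mult_def)
  then show "ga_mult 1 ga_one ga_one w = ga_one w"
    by (simp add: ga_mult_def ga_one_def)
qed

lemma hom_algebra_nonzero_K1_iff: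
  assumes EV: "E \<subseteq> V \<times> V"
  shows "hom_algebra_nonzero V E (Kc_edges 1) 1 \<longleftrightarrow> E = {}"
proof
  assume nonzero: "hom_algebra_nonzero V E (Kc_edges 1) 1"
  show "E = {}"
  proof (rule ccontr)
    assume "E \<noteq> {}"
    then obtain v w where "(v, w) \<in> E" by auto
    then have "ga_mult 1 (proj_e 1 v 0) (proj_e 1 w 0) \<in> hom_ideal_gens V E (Kc_edges 1) 1"
      using EV unfolding hom_ideal_gens_def Kc_edges_def by blast
    then have "ga_one \<in> hom_ideal V E (Kc_edges 1) 1"
      unfolding hom_ideal_def proj_e_1 ga_mult_1_one_one by (rule star_ideal.gen)
    then show False using nonzero by (simp add: hom_algebra_nonzero_def)
  qed
next
  assume "E = {}"
  then have "proper_colouring V E 1 (\<lambda>_. 0)" by (simp add: proper_colouring_def)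
  then show "hom_algebra_nonzero V E (Kc_edges 1) 1"
    by (rule hom_algebra_nonzero_of_colouring[OF zero_less_one])
qed

lemma Least_eq_1_iff:
  fixes P :: "nat \<Rightarrow> bool"
  assumes "P n" "\<not> P 0"
  shows "(LEAST c. P c) = 1 \<longleftrightarrow> P 1"
proof
  assume "(LEAST c. P c) = 1"
  then show "P 1" using LeastI[of P n] assms(1) by simp
next
  assume "P 1"
  then show "(LEAST c. P c) = 1"
    by (rule Least_equality) (metis assms(2) less_one not_less)
qed

lemma chi_alg_eq_1_iff:
  assumes "graph V E"
  shows "chi_alg V E = 1 \<longleftrightarrow> E = {}"
proof -
  obtain c f where "0 < c" "proper_colouring V E c f"
    using graph_proper_colouring_exists[OF assms] by blast
  then have "hom_algebra_nonzero V E (Kc_edges c) c"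
    by (rule hom_algebra_nonzero_of_colouring)
  then have "chi_alg V E = 1 \<longleftrightarrow> hom_algebra_nonzero V E (Kc_edges 1) 1"
    unfolding chi_alg_def using \<open>0 < c\<close> by (subst Least_eq_1_iff[of _ c]) auto
  also have "\<dots> \<longleftrightarrow> E = {}"
    by (rule hom_algebra_nonzero_K1_iff) (use assms in \<open>simp add: graph_def\<close>)
  finally show ?thesis .
qed

lemma chromatic_number_eq_1_iff:
  assumes "graph V E" "V \<noteq> {}"
  shows "chromatic_number V E = 1 \<longleftrightarrow> E = {}"
proof -
  obtain c f where "proper_colouring V E c f"
    using graph_proper_colouring_exists[OF assms(1)] by blast
  moreover have "\<not> proper_colouring V E 0 g" for g
    using assms(2) by (auto simp: proper_colouring_def)
  ultimately have "chromatic_number V E = 1 \<longleftrightarrow> (\<exists>f. proper_colouring V E 1 f)"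
    unfolding chromatic_number_altdef by (subst Least_eq_1_iff) auto
  also have "\<dots> \<longleftrightarrow> E = {}"
    by (rule proper_colouring_1_iff) (use assms(1) in \<open>simp add: graph_def\<close>)
  finally show ?thesis .
qed

theorem mainTheorem15:
  fixes V :: "'v set" and E :: "('v \<times> 'v) set"
  assumes "graph V E"
  shows "(chi_alg V E = 1 \<longleftrightarrow> E = {}) \<and>
         (V \<noteq> {} \<longrightarrow> (chi_alg V E = 1 \<longleftrightarrow> chromatic_number V E = 1))"
  using chi_alg_eq_1_iff[OF assms] chromatic_number_eq_1_iff[OF assms] by blast

end
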